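(* Let $s_0\in(0,1)$, $\tau,\eta,\lambda>0$, and let $(I_j^0)_{j\in\mathbb{Z}}$ be a finitely supported sequence with $I_j^0\in[0,1)$ for all $j$ and $I_j^0>0$ for at least one $j$. Let $f(v):=s_0(1-e^{-\tau v})-\eta v$ and let $(\mathcal{I}_j^\infty)_{j\in\mathbb{Z}}$ be the unique positive, bounded solution of $$0=f(\mathcal{I}_j)+I_j^0+\lambda\left(\mathcal{I}_{j-1}-2\mathcal{I}_j+\mathcal{I}_{j+1}\right),\qquad j\in\mathbb{Z}.$$ Let $(\mathcal{I}_j(t))_{j\in\mathbb{Z}}$ be the solution of $$\mathcal{I}_j'(t)=f(\mathcal{I}_j(t))+I_j^0+\lambda\left(\mathcal{I}_{j-1}(t)-2\mathcal{I}_j(t)+\mathcal{I}_{j+1}(t)\right),\qquad j\in\mathbb{Z},\ t>0,$$ starting from some nonnegative, bounded, compactly (finitely) supported initial condition. Then $(\mathcal{I}_j(t))_{j\in\mathbb{Z}}$ converges to $(\mathcal{I}_j^\infty)_{j\in\mathbb{Z}}$ locally uniformly in $j$ as $t\to+\infty$.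
   Context: Existence and uniqueness of the positive bounded stationary solution $(\mathcal{I}_j^\infty)$ is part of the setting (it is a separate result of the paper). *)

theory Defs
  imports "HOL-Analysis.Analysis"
begin

definition reac :: "real \<Rightarrow> real \<Rightarrow> real \<Rightarrow> real \<Rightarrow> real" where
  "reac s0 tau eta v = s0 * (1 - exp (- tau * v)) - eta * v"

definition dlap :: "(int \<Rightarrow> real) \<Rightarrow> int \<Rightarrow> real" where
  "dlap u j = u (j - 1) - 2 * u j + u (j + 1)"

end

theory Submission
  imports Defs
begin

text \<open>
  A barrier \<open>\<epsilon> e\<^sup>N\<^sup>t (1 + j\<^sup>2)\<close> yields a comparison principle for the lattice equation among
  solutions that are bounded on finite time intervals. Since \<open>f\<close> is concave with \<open>f 0 = 0\<close>,
  every multiple \<open>a I\<^sub>\<infinity>\<close> with \<open>a \<ge> 1\<close> is a supersolution, so the solution stays between \<open>0\<close> and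
  such a multiple dominating the finitely supported initial datum. Its upper and lower limits
  \<open>U\<close> and \<open>L\<close> as \<open>t \<rightarrow> \<infinity>\<close> are then a bounded subsolution and a nonnegative supersolution of the
  stationary problem, and \<open>L\<close> is positive because the source is positive somewhere. As
  \<open>f(v)/v\<close> is strictly decreasing, a discrete maximum principle for the ratios \<open>U / I\<^sub>\<infinity>\<close> and
  \<open>L / I\<^sub>\<infinity>\<close> gives \<open>U \<le> I\<^sub>\<infinity> \<le> L\<close>, so the solution converges to \<open>I\<^sub>\<infinity>\<close> at every site.
\<close>

section \<open>The reaction term\<close>

lemma one_minus_exp_scaled_less:
  fixes a b x :: real
  assumes "0 < a" "a < b" "0 < x"
  shows "a * (1 - exp (- b * x)) < b * (1 - exp (- a * x))"
proof -
  let ?k = "\<lambda>y. b * (1 - exp (- a * y)) - a * (1 - exp (- b * y))"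
  have "?k 0 < ?k x"
  proof (rule DERIV_pos_imp_increasing_open[OF assms(3)])
    fix y :: real
    assume y: "0 < y" "y < x"
    have "exp (- b * y) < exp (- a * y)"
      using assms y by (simp add: mult_strict_right_mono)
    then have "0 < a * b * (exp (- a * y) - exp (- b * y))"
      using assms by simp
    moreover have "DERIV ?k y :> a * b * (exp (- a * y) - exp (- b * y))"
      by (auto intro!: derivative_eq_intros simp: algebra_simps)
    ultimately show "\<exists>d. DERIV ?k y :> d \<and> 0 < d"
      by blast
  qed (intro continuous_intros)
  then show ?thesis
    by simp
qed

lemma reac_mult_less:
  assumes "0 < s0" "0 < tau" "1 < r" "0 < v"
  shows "reac s0 tau eta (r * v) < r * reac s0 tau eta v"
proof -
  have "1 * (1 - exp (- r * (tau * v))) < r * (1 - exp (- 1 * (tau * v)))"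
    using one_minus_exp_scaled_less[of 1 r "tau * v"] assms by simp
  then have "s0 * (1 - exp (- tau * (r * v))) < s0 * (r * (1 - exp (- tau * v)))"
    using assms(1) by (intro mult_strict_left_mono) (simp_all add: algebra_simps)
  then show ?thesis
    unfolding reac_def by (simp add: algebra_simps)
qed

lemma reac_mult_greater:
  assumes "0 < s0" "0 < tau" "0 < r" "r < 1" "0 < v"
  shows "r * reac s0 tau eta v < reac s0 tau eta (r * v)"
proof -
  have "r * (1 - exp (- 1 * (tau * v))) < 1 * (1 - exp (- r * (tau * v)))"
    using one_minus_exp_scaled_less[of r 1 "tau * v"] assms by simp
  then have "s0 * (r * (1 - exp (- tau * v))) < s0 * (1 - exp (- tau * (r * v)))"
    using assms(1) by (intro mult_strict_left_mono) (simp_all add: algebra_simps)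
  then show ?thesis
    unfolding reac_def by (simp add: algebra_simps)
qed

lemma reac_mult_le:
  assumes "0 < s0" "0 < tau" "1 \<le> r" "0 \<le> v"
  shows "reac s0 tau eta (r * v) \<le> r * reac s0 tau eta v"
  using reac_mult_less[OF assms(1,2), of r v eta] assms(3,4)
  by (cases "r = 1 \<or> v = 0") (auto simp: reac_def)

lemma reac_zero [simp]: "reac s0 tau eta 0 = 0"
  by (simp add: reac_def)

lemma reac_lipschitz:
  assumes "0 \<le> s0" "0 \<le> tau" "0 \<le> eta" "- B \<le> x" "- B \<le> y"
  shows "\<bar>reac s0 tau eta x - reac s0 tau eta y\<bar> \<le> (s0 * tau * exp (tau * B) + eta) * \<bar>x - y\<bar>"
proof -
  have "norm (reac s0 tau eta x - reac s0 tau eta y) \<le> (s0 * tau * exp (tau * B) + eta) * norm (x - y)"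
  proof (rule field_differentiable_bound[of "{- B..}"])
    fix z :: real
    assume "z \<in> {- B..}"
    then have "exp (- tau * z) \<le> exp (tau * B)"
      using assms(2) mult_left_mono[of "- z" B tau] by simp
    then have "s0 * tau * exp (- tau * z) \<le> s0 * tau * exp (tau * B)"
      using assms(1,2) by (simp add: mult_left_mono)
    moreover have "0 \<le> s0 * tau * exp (- tau * z)"
      using assms(1,2) by simp
    ultimately show "norm (s0 * tau * exp (- tau * z) - eta) \<le> s0 * tau * exp (tau * B) + eta"
      using assms(3) by (simp add: abs_le_iff)
    show "(reac s0 tau eta has_field_derivative s0 * tau * exp (- tau * z) - eta) (at z within {- B..})"
      unfolding reac_def by (auto intro!: derivative_eq_intros)
  qed (use assms in auto)
  then show ?thesis
    by simp
qed

section \<open>A comparison principle on the lattice\<close>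

lemma first_hitting_time:
  fixes Z :: "real \<Rightarrow> 'a \<Rightarrow> real"
  assumes J: "finite J"
    and cont: "\<And>i. continuous_on {0..T} (\<lambda>s. Z s i)"
    and init: "\<And>i. 0 < Z 0 i"
    and outside: "\<And>s i. 0 \<le> s \<Longrightarrow> s \<le> T \<Longrightarrow> i \<notin> J \<Longrightarrow> 0 < Z s i"
    and hit: "0 \<le> t" "t \<le> T" "Z t j \<le> 0"
  obtains ts js where "0 < ts" "ts \<le> T" "Z ts js = 0"
    "\<And>i. 0 \<le> Z ts i" "\<And>s i. 0 \<le> s \<Longrightarrow> s < ts \<Longrightarrow> 0 < Z s i"
proof -
  define S where "S = (\<Union>i\<in>J. {s \<in> {0..T}. Z s i \<le> 0})"
  have "j \<in> J"
    using outside[OF hit(1,2), of j] hit(3) by linarith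
  then have "t \<in> S"
    using hit unfolding S_def by (intro UN_I[of j]) simp_all
  have "closed S"
    unfolding S_def using J cont
    by (intro closed_UN ballI continuous_on_closed_Collect_le continuous_on_const) auto
  moreover have "bounded S"
    by (rule bounded_subset[of "{0..T}"]) (auto simp: S_def)
  ultimately have "compact S"
    by (simp add: compact_eq_bounded_closed)
  then obtain ts where "ts \<in> S" and ts_min: "\<And>s. s \<in> S \<Longrightarrow> ts \<le> s"
    using compact_attains_inf[of S] \<open>t \<in> S\<close> by (metis empty_iff)
  from \<open>ts \<in> S\<close> obtain js where ts: "0 \<le> ts" "ts \<le> T" "Z ts js \<le> 0"
    unfolding S_def by (elim UN_E) auto
  have before: "0 < Z s i" if "0 \<le> s" "s < ts" for s i
  proof (cases "i \<in> J")
    case True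
    then show ?thesis
      using ts_min[of s] that ts(2) unfolding S_def by force
  next
    case False
    then show ?thesis
      using outside that ts(2) by simp
  qed
  have "0 < ts"
    using ts init[of js] by (cases "ts = 0") auto
  have at_ts: "0 \<le> Z ts i" for i
  proof (rule continuous_ge_on_closure[where S = "{0..<ts}" and f = "\<lambda>s. Z s i" and x = ts])
    show "continuous_on (closure {0..<ts}) (\<lambda>s. Z s i)"
      using ts(2) \<open>0 < ts\<close> by (auto intro: continuous_on_subset[OF cont])
  qed (use \<open>0 < ts\<close> before in \<open>auto intro: less_imp_le\<close>)
  show thesis
    using that[OF \<open>0 < ts\<close> ts(2), of js] ts(3) at_ts[of js] at_ts before by simp
qed

definition quad_weight :: "int \<Rightarrow> real" where
  "quad_weight k = 1 + (real_of_int k)\<^sup>2"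

lemma one_le_quad_weight: "1 \<le> quad_weight k"
  by (simp add: quad_weight_def)

lemma dlap_quad_weight: "dlap quad_weight k = 2"
  by (simp add: dlap_def quad_weight_def algebra_simps power2_eq_square)

lemma quad_weight_large_outside:
  assumes "0 < eps" "k \<notin> {- \<lceil>B / eps\<rceil>..\<lceil>B / eps\<rceil>}"
  shows "B < eps * quad_weight k"
proof -
  have "\<lceil>B / eps\<rceil> < \<bar>k\<bar>"
    using assms(2) by auto
  then have "B / eps < real_of_int \<bar>k\<bar>"
    using le_of_int_ceiling[of "B / eps"] by (metis of_int_less_iff order_le_less_trans)
  then have "B < eps * \<bar>real_of_int k\<bar>"
    using assms(1) by (simp add: divide_less_eq mult.commute)
  also have "\<dots> \<le> eps * quad_weight k"
  proof (intro mult_left_mono)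
    have "0 \<le> (\<bar>real_of_int k\<bar> - 1)\<^sup>2"
      by simp
    then show "\<bar>real_of_int k\<bar> \<le> quad_weight k"
      unfolding quad_weight_def by (simp add: power2_eq_square algebra_simps)
  qed (use assms(1) in simp)
  finally show ?thesis .
qed

lemma contact_rate_pos:
  fixes w :: "int \<Rightarrow> real"
  assumes lam: "0 \<le> lam" and C: "0 \<le> C" and "0 < E"
    and contact: "w j + E * quad_weight j = 0" and above: "\<And>i. 0 \<le> w i + E * quad_weight i"
    and ineq: "lam * dlap w j - C * \<bar>w j\<bar> \<le> D"
  shows "0 < D + (C + 2 * lam + 1) * (E * quad_weight j)"
proof -
  have "dlap (\<lambda>i. w i + E * quad_weight i) j = dlap w j + E * dlap quad_weight j"
    unfolding dlap_def by (simp add: algebra_simps)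
  then have "dlap w j = dlap (\<lambda>i. w i + E * quad_weight i) j - 2 * E"
    by (simp add: dlap_quad_weight)
  moreover have "0 \<le> dlap (\<lambda>i. w i + E * quad_weight i) j"
    unfolding dlap_def using contact above[of "j - 1"] above[of "j + 1"] by simp
  ultimately have "lam * (- 2 * E) \<le> lam * dlap w j"
    using lam by (intro mult_left_mono) auto
  moreover have "\<bar>w j\<bar> = E * quad_weight j"
  proof -
    have "w j = - (E * quad_weight j)"
      using contact by linarith
    moreover have "0 < E * quad_weight j"
      using \<open>0 < E\<close> one_le_quad_weight[of j] by simp
    ultimately show ?thesis
      by simp
  qed
  moreover have "(2 * lam + 1) * E \<le> (2 * lam + 1) * (E * quad_weight j)"
    using \<open>0 < E\<close> one_le_quad_weight[of j] lam by (intro mult_left_mono) auto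
  ultimately show ?thesis
    using ineq \<open>0 < E\<close> by (simp add: algebra_simps)
qed

lemma comparison_principle:
  fixes W Wd :: "real \<Rightarrow> int \<Rightarrow> real"
  assumes lam: "0 \<le> lam" and C: "0 \<le> C"
    and cont: "\<And>j. continuous_on {0..T} (\<lambda>t. W t j)"
    and deriv: "\<And>j t. 0 < t \<Longrightarrow> t \<le> T \<Longrightarrow> ((\<lambda>s. W s j) has_real_derivative Wd t j) (at t)"
    and ineq: "\<And>j t. 0 < t \<Longrightarrow> t \<le> T \<Longrightarrow> lam * dlap (W t) j - C * \<bar>W t j\<bar> \<le> Wd t j"
    and init: "\<And>j. 0 \<le> W 0 j"
    and bdd: "\<And>t j. 0 \<le> t \<Longrightarrow> t \<le> T \<Longrightarrow> - B \<le> W t j"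
    and t: "0 \<le> t" "t \<le> T"
  shows "0 \<le> W t j"
proof (rule ccontr)
  assume "\<not> 0 \<le> W t j"
  define N where "N = C + 2 * lam + 1"
  have "0 < N"
    unfolding N_def using lam C by simp
  \<comment> \<open>The barrier psi grows in time fast enough to dominate the reaction and the discrete
    Laplacian, and in space fast enough to confine the first contact to finitely many sites.\<close>
  define eps where "eps = - W t j / (2 * exp (N * T) * quad_weight j)"
  have "0 < eps"
    unfolding eps_def using \<open>\<not> 0 \<le> W t j\<close> one_le_quad_weight[of j]
    by (intro divide_pos_pos) auto
  define psi where "psi s k = eps * exp (N * s) * quad_weight k" for s k
  define Z where "Z s k = W s k + psi s k" for s k
  have psi_ge: "eps * quad_weight k \<le> psi s k" if "0 \<le> s" for s k
    unfolding psi_def using \<open>0 < eps\<close> \<open>0 < N\<close> one_le_quad_weight[of k] that by simp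
  have "psi t j \<le> eps * exp (N * T) * quad_weight j"
    unfolding psi_def using \<open>0 < eps\<close> \<open>0 < N\<close> one_le_quad_weight[of j] t by simp
  also have "\<dots> = - W t j / 2"
    unfolding eps_def using one_le_quad_weight[of j] by (simp add: field_simps)
  finally have "Z t j \<le> 0"
    unfolding Z_def using \<open>\<not> 0 \<le> W t j\<close> by simp
  obtain ts js where ts: "0 < ts" "ts \<le> T" "Z ts js = 0" "\<And>i. 0 \<le> Z ts i"
    and before: "\<And>s i. 0 \<le> s \<Longrightarrow> s < ts \<Longrightarrow> 0 < Z s i"
  proof (rule first_hitting_time[of "{- \<lceil>B / eps\<rceil>..\<lceil>B / eps\<rceil>}" T Z t j])
    show "continuous_on {0..T} (\<lambda>s. Z s i)" for i
      unfolding Z_def psi_def by (intro continuous_intros cont)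
    show "0 < Z 0 i" for i
      using init[of i] psi_ge[of 0 i] mult_pos_pos[OF \<open>0 < eps\<close>, of "quad_weight i"]
        one_le_quad_weight[of i] unfolding Z_def by linarith
    show "0 < Z s i" if "0 \<le> s" "s \<le> T" "i \<notin> {- \<lceil>B / eps\<rceil>..\<lceil>B / eps\<rceil>}" for s i
      using quad_weight_large_outside[OF \<open>0 < eps\<close> that(3)] psi_ge[OF that(1), of i]
        bdd[OF that(1,2), of i] unfolding Z_def by simp
  qed (use t \<open>Z t j \<le> 0\<close> in auto)
  define E where "E = eps * exp (N * ts)"
  have "0 < Wd ts js + N * (E * quad_weight js)"
    unfolding N_def
  proof (rule contact_rate_pos[OF lam C, of E "W ts"])
    show "0 < E"
      unfolding E_def using \<open>0 < eps\<close> by simp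
  qed (use ts ineq[OF ts(1,2)] in \<open>simp_all add: Z_def psi_def E_def\<close>)
  moreover have "((\<lambda>s. Z s js) has_real_derivative Wd ts js + N * (E * quad_weight js)) (at ts)"
    unfolding Z_def psi_def E_def
    by (rule derivative_eq_intros deriv[OF ts(1,2)] refl | simp add: algebra_simps)+
  ultimately obtain d where "0 < d" and d: "\<And>h. 0 < h \<Longrightarrow> h < d \<Longrightarrow> Z (ts - h) js < Z ts js"
    using DERIV_pos_inc_left by blast
  define h where "h = min d ts / 2"
  have "0 < h" "h < d" "h \<le> ts"
    unfolding h_def using \<open>0 < d\<close> ts(1) by auto
  then show False
    using d[of h] before[of "ts - h" js] ts(3) by simp
qed

section \<open>Upper limits along a trajectory\<close>

lemma decrease_at_rate:
  fixes g D :: "real \<Rightarrow> real"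
  assumes "a \<le> b" "continuous_on {a..b} g"
    and "\<And>x. a < x \<Longrightarrow> x < b \<Longrightarrow> (g has_real_derivative D x) (at x)"
    and "\<And>x. a < x \<Longrightarrow> x < b \<Longrightarrow> D x \<le> - del"
  shows "g b + del * (b - a) \<le> g a"
proof -
  have "(\<lambda>x. g x + del * x) b \<le> (\<lambda>x. g x + del * x) a"
  proof (rule DERIV_nonpos_imp_decreasing_open[OF assms(1)])
    fix x
    assume x: "a < x" "x < b"
    have "((\<lambda>x. g x + del * x) has_real_derivative D x + del) (at x)"
      by (rule derivative_eq_intros assms(3)[OF x] | simp)+
    then show "\<exists>y. ((\<lambda>x. g x + del * x) has_real_derivative y) (at x) \<and> y \<le> 0"
      using assms(4)[OF x] by force
  qed (intro continuous_intros assms(2))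
  then show ?thesis
    by (simp add: algebra_simps)
qed

lemma decrease_at_rate_while_above:
  fixes g D :: "real \<Rightarrow> real"
  assumes ab: "a \<le> b" and cont: "continuous_on {a..b} g"
    and deriv: "\<And>x. a < x \<Longrightarrow> x < b \<Longrightarrow> (g has_real_derivative D x) (at x)"
    and rate: "\<And>x. a < x \<Longrightarrow> x < b \<Longrightarrow> c < g x \<Longrightarrow> D x \<le> - del"
    and "c < g b" "0 \<le> del"
  shows "g b + del * (b - a) \<le> g a"
proof -
  have above: "c < g x" if "a < x" "x < b" for x
  proof (rule ccontr)
    assume "\<not> c < g x"
    define S where "S = {y \<in> {a..b}. g y \<le> c}"
    have "closed S"
      unfolding S_def by (intro continuous_on_closed_Collect_le cont continuous_on_const) auto
    moreover have "bounded S"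
      by (rule bounded_subset[of "{a..b}"]) (auto simp: S_def)
    ultimately have "compact S"
      by (simp add: compact_eq_bounded_closed)
    moreover have "x \<in> S"
      using that \<open>\<not> c < g x\<close> unfolding S_def by simp
    ultimately obtain s where "s \<in> S" and s_max: "\<And>y. y \<in> S \<Longrightarrow> y \<le> s"
      using compact_attains_sup[of S] by (metis empty_iff)
    then have s: "a \<le> s" "s \<le> b" "g s \<le> c"
      unfolding S_def by auto
    have "g b + del * (b - s) \<le> g s"
    proof (rule decrease_at_rate)
      show "continuous_on {s..b} g"
        using s by (auto intro: continuous_on_subset[OF cont])
      fix y
      assume y: "s < y" "y < b"
      then have "c < g y"
        using s_max[of y] s unfolding S_def by force
      then show "D y \<le> - del"
        using rate y s by simp
      show "(g has_real_derivative D y) (at y)"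
        using deriv y s by simp
    qed (use s in simp)
    then show False
      using s \<open>c < g b\<close> mult_nonneg_nonneg[OF \<open>0 \<le> del\<close>, of "b - s"] by linarith
  qed
  show ?thesis
    using decrease_at_rate[OF ab cont deriv] rate above by simp
qed

definition is_limsup_at_top :: "(real \<Rightarrow> real) \<Rightarrow> real \<Rightarrow> bool" where
  "is_limsup_at_top g U \<longleftrightarrow>
     (\<forall>e>0. \<forall>\<^sub>F t in at_top. g t \<le> U + e) \<and> (\<forall>e>0. \<exists>\<^sub>F t in at_top. U - e < g t)"

lemma is_limsup_at_top_exists:
  assumes "\<forall>\<^sub>F t in at_top. \<bar>g t\<bar> \<le> K"
  shows "\<exists>U. is_limsup_at_top g U"
proof -
  define A where "A = {s. \<forall>\<^sub>F t in at_top. g t \<le> s}"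
  have "K \<in> A"
    unfolding A_def using assms by (auto elim: eventually_mono)
  have "bdd_below A"
  proof (rule bdd_belowI)
    fix s
    assume "s \<in> A"
    then have "\<forall>\<^sub>F t in at_top. g t \<le> s"
      unfolding A_def by simp
    from eventually_conj[OF assms this] obtain t where "\<bar>g t\<bar> \<le> K" "g t \<le> s"
      unfolding eventually_at_top_linorder by blast
    then show "- K \<le> s"
      by linarith
  qed
  have "is_limsup_at_top g (Inf A)"
    unfolding is_limsup_at_top_def
  proof safe
    fix e :: real
    assume "0 < e"
    then obtain s where "s \<in> A" "s < Inf A + e"
      using cInf_less_iff[of A "Inf A + e"] \<open>K \<in> A\<close> \<open>bdd_below A\<close> by auto
    then show "\<forall>\<^sub>F t in at_top. g t \<le> Inf A + e"
      unfolding A_def by (auto elim: eventually_mono)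
    show "\<exists>\<^sub>F t in at_top. Inf A - e < g t"
    proof (rule ccontr)
      assume "\<not> (\<exists>\<^sub>F t in at_top. Inf A - e < g t)"
      then have "Inf A - e \<in> A"
        unfolding A_def not_frequently[symmetric] by (simp add: not_frequently not_less)
      then show False
        using cInf_lower[OF _ \<open>bdd_below A\<close>, of "Inf A - e"] \<open>0 < e\<close> by simp
    qed
  qed
  then show ?thesis ..
qed

lemma is_limsup_at_top_le:
  assumes "is_limsup_at_top g U" "\<forall>\<^sub>F t in at_top. g t \<le> K"
  shows "U \<le> K"
proof (rule ccontr)
  assume "\<not> U \<le> K"
  then have "\<exists>\<^sub>F t in at_top. U - (U - K) < g t"
    using assms(1) unfolding is_limsup_at_top_def by (meson diff_gt_0_iff_gt not_le)
  moreover have "\<forall>\<^sub>F t in at_top. \<not> U - (U - K) < g t"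
    using assms(2) by (simp add: not_less)
  ultimately show False
    by (simp add: frequently_def)
qed

lemma is_limsup_at_top_scaled_sum:
  assumes "is_limsup_at_top g U" "is_limsup_at_top h V" "0 < lam" "0 < e"
  shows "\<forall>\<^sub>F t in at_top. lam * (g t + h t) \<le> lam * (U + V) + e"
proof -
  have "\<forall>\<^sub>F t in at_top. g t \<le> U + e / (2 * lam)" "\<forall>\<^sub>F t in at_top. h t \<le> V + e / (2 * lam)"
    using assms unfolding is_limsup_at_top_def by simp_all
  then show ?thesis
  proof eventually_elim
    case (elim t)
    then have "lam * (g t + h t) \<le> lam * (U + V + e / lam)"
      using \<open>0 < lam\<close> by (intro mult_left_mono) auto
    then show ?case
      using \<open>0 < lam\<close> by (simp add: algebra_simps)
  qed
qed

lemma tendsto_if_limsup_liminf: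
  assumes "is_limsup_at_top g U" "is_limsup_at_top (\<lambda>t. - g t) V" "U \<le> c" "c \<le> - V"
  shows "(g \<longlongrightarrow> c) at_top"
proof (rule order_tendstoI)
  fix y
  assume "y < c"
  then have "\<forall>\<^sub>F t in at_top. - g t \<le> V + (c - y) / 2"
    using assms(2) unfolding is_limsup_at_top_def by simp
  moreover have "y < - V - (c - y) / 2"
    using assms(4) \<open>y < c\<close> by (simp add: field_simps)
  ultimately show "\<forall>\<^sub>F t in at_top. y < g t"
    by (auto elim: eventually_mono)
next
  fix y
  assume "c < y"
  then have "\<forall>\<^sub>F t in at_top. g t \<le> U + (y - c) / 2"
    using assms(1) unfolding is_limsup_at_top_def by simp
  moreover have "U + (y - c) / 2 < y"
    using assms(3) \<open>c < y\<close> by (simp add: field_simps)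
  ultimately show "\<forall>\<^sub>F t in at_top. g t < y"
    by (auto elim: eventually_mono)
qed

lemma limsup_rhs_nonneg:
  fixes g h G :: "real \<Rightarrow> real"
  assumes G: "isCont G U" and cont: "continuous_on {0..} g"
    and deriv: "\<And>t. 0 < t \<Longrightarrow> (g has_real_derivative G (g t) + h t) (at t)"
    and U: "is_limsup_at_top g U"
    and h: "\<And>e. 0 < e \<Longrightarrow> \<forall>\<^sub>F t in at_top. h t \<le> H + e"
  shows "0 \<le> G U + H"
proof (rule ccontr)
  assume "\<not> 0 \<le> G U + H"
  define del where "del = - (G U + H) / 3"
  have "0 < del"
    unfolding del_def using \<open>\<not> 0 \<le> G U + H\<close> by simp
  then obtain r where "0 < r" and r: "\<And>v. dist v U < r \<Longrightarrow> dist (G v) (G U) < del"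
    using G unfolding continuous_at_eps_delta by blast
  have "\<forall>\<^sub>F t in at_top. g t \<le> U + r / 2"
    using U \<open>0 < r\<close> unfolding is_limsup_at_top_def by simp
  then have "\<forall>\<^sub>F t in at_top. 1 \<le> t \<and> h t \<le> H + del \<and> g t \<le> U + r / 2"
    using h[OF \<open>0 < del\<close>] eventually_ge_at_top[of 1] by eventually_elim auto
  then obtain T where T: "\<And>t. T \<le> t \<Longrightarrow> 1 \<le> t \<and> h t \<le> H + del \<and> g t \<le> U + r / 2"
    unfolding eventually_at_top_linorder by blast
  \<comment> \<open>Once g is close to its limsup, it decreases at rate del; starting from a late time where
    g is near U and going backwards, g would have to exceed its eventual upper bound.\<close>
  have "\<exists>\<^sub>F t in at_top. U - r / 2 < g t \<and> T + 2 * r / del \<le> t"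
    using U \<open>0 < r\<close> unfolding is_limsup_at_top_def
    by (intro frequently_eventually_frequently eventually_ge_at_top) auto
  then obtain t0 where t0: "U - r / 2 < g t0" "T + 2 * r / del \<le> t0"
    by (auto dest: frequently_ex)
  have "T \<le> t0"
    using t0(2) divide_pos_pos[of "2 * r" del] \<open>0 < r\<close> \<open>0 < del\<close> by linarith
  have "g t0 + del * (t0 - T) \<le> g T"
  proof (rule decrease_at_rate_while_above[OF \<open>T \<le> t0\<close>, where c = "U - r"])
    show "continuous_on {T..t0} g"
      using T[of T] by (auto intro: continuous_on_subset[OF cont])
    show "(g has_real_derivative G (g x) + h x) (at x)" if "T < x" for x
      using deriv T[of x] that by simp
    show "G (g x) + h x \<le> - del" if "T < x" "U - r < g x" for x
    proof -
      have "dist (g x) U < r"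
        using T[of x] that by (simp add: dist_real_def abs_less_iff)
      then have "G (g x) < G U + del"
        using r[of "g x"] by (simp add: dist_real_def abs_less_iff)
      moreover have "h x \<le> H + del"
        using T[of x] that by simp
      moreover have "G U + H = - 3 * del"
        unfolding del_def by simp
      ultimately show ?thesis
        by linarith
    qed
  qed (use t0 \<open>0 < r\<close> \<open>0 < del\<close> in auto)
  moreover have "2 * r \<le> del * (t0 - T)"
    using t0(2) \<open>0 < del\<close> by (simp add: field_simps)
  ultimately show False
    using T[of T] t0(1) \<open>0 < r\<close> by simp
qed

section \<open>A maximum principle for weighted ratios\<close>

lemma weighted_increment_less:
  fixes r P :: "int \<Rightarrow> real"
  assumes P_pos: "\<And>j. 0 < P j"
    and balance: "\<And>j. c < r j \<Longrightarrow> 0 < P (j + 1) * (r (j + 1) - r j) + P (j - 1) * (r (j - 1) - r j)"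
    and "c < r k" "r k < r (k + 1)"
  shows "P k * P (k + 1) * (r (k + 1) - r k) < P (k + 1) * P (k + 2) * (r (k + 2) - r (k + 1))"
proof -
  have "P k * (r (k + 1) - r k) < P (k + 2) * (r (k + 2) - r (k + 1))"
    using balance[of "k + 1"] assms(3,4) by (simp add: algebra_simps)
  then have "P (k + 1) * (P k * (r (k + 1) - r k)) < P (k + 1) * (P (k + 2) * (r (k + 2) - r (k + 1)))"
    using P_pos by (rule mult_strict_left_mono)
  then show ?thesis
    by (simp add: algebra_simps)
qed

lemma weighted_ratio_no_ascent_above:
  fixes r P :: "int \<Rightarrow> real"
  assumes P_pos: "\<And>j. 0 < P j" and P_le: "\<And>j. P j \<le> M"
    and r_le: "\<And>j. r j \<le> B"
    and balance: "\<And>j. c < r j \<Longrightarrow> 0 < P (j + 1) * (r (j + 1) - r j) + P (j - 1) * (r (j - 1) - r j)"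
    and "c < r a" "r a < r (a + 1)"
  shows False
proof -
  \<comment> \<open>The weighted increment Q is increasing to the right of a, so r grows at least linearly.\<close>
  define Q where "Q k = P k * P (k + 1) * (r (k + 1) - r k)" for k
  have "0 < Q a"
    unfolding Q_def using P_pos \<open>r a < r (a + 1)\<close> by simp
  have "0 < M"
    using P_pos[of 0] P_le[of 0] by simp
  define d where "d = Q a / (M * M)"
  have "0 < d"
    unfolding d_def using \<open>0 < Q a\<close> \<open>0 < M\<close> by simp
  have grow: "r a + real n * d \<le> r (a + int n) \<and> Q a \<le> Q (a + int n)" for n
  proof (induction n)
    case 0
    then show ?case by simp
  next
    case (Suc n)
    let ?k = "a + int n"
    have "c < r ?k"
      using Suc \<open>c < r a\<close> mult_nonneg_nonneg[of "real n" d] \<open>0 < d\<close> by linarith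
    have "0 < Q ?k"
      using Suc \<open>0 < Q a\<close> by simp
    moreover have "0 < P ?k * P (?k + 1)"
      using P_pos by simp
    ultimately have step_pos: "0 < r (?k + 1) - r ?k"
      unfolding Q_def by (rule zero_less_mult_pos)
    have "P ?k * P (?k + 1) \<le> M * M"
      using P_pos[of ?k] P_le[of ?k] P_pos[of "?k + 1"] P_le[of "?k + 1"] by (intro mult_mono) auto
    then have "Q ?k \<le> M * M * (r (?k + 1) - r ?k)"
      unfolding Q_def using step_pos by (simp add: mult_right_mono)
    then have "d \<le> r (?k + 1) - r ?k"
      unfolding d_def using \<open>0 < M\<close> Suc by (simp add: divide_le_eq mult.commute)
    moreover have "Q ?k < Q (?k + 1)"
      using weighted_increment_less[OF P_pos balance \<open>c < r ?k\<close>] step_pos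
      unfolding Q_def by (simp add: add.assoc)
    ultimately show ?case
      using Suc by (simp add: algebra_simps)
  qed
  obtain n :: nat where "(B - r a) / d < real n"
    using reals_Archimedean2 by blast
  then have "B - r a < real n * d"
    using \<open>0 < d\<close> by (simp add: field_simps)
  with grow[of n] r_le[of "a + int n"] show False
    by linarith
qed

lemma weighted_ratio_le:
  fixes r P :: "int \<Rightarrow> real"
  assumes P_pos: "\<And>j. 0 < P j" and P_le: "\<And>j. P j \<le> M"
    and r_le: "\<And>j. r j \<le> B"
    and balance: "\<And>j. c < r j \<Longrightarrow> 0 < P (j + 1) * (r (j + 1) - r j) + P (j - 1) * (r (j - 1) - r j)"
  shows "r j \<le> c"
proof (rule ccontr)
  assume "\<not> r j \<le> c"
  then have "c < r j"
    by simp
  show False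
  proof (cases "r j < r (j + 1)")
    case True
    then show False
      using weighted_ratio_no_ascent_above[OF P_pos P_le r_le balance \<open>c < r j\<close>] by blast
  next
    case False
    then have "P (j + 1) * (r (j + 1) - r j) \<le> 0"
      using P_pos[of "j + 1"] by (simp add: mult_nonneg_nonpos)
    then have "0 < P (j - 1) * (r (j - 1) - r j)"
      using balance[OF \<open>c < r j\<close>] by linarith
    then have "r j < r (j - 1)"
      using P_pos[of "j - 1"] by (simp add: zero_less_mult_iff)
    show False
    proof (rule weighted_ratio_no_ascent_above[of "\<lambda>k. P (- k)" M "\<lambda>k. r (- k)" B c "- j"])
      show "0 < P (- (k + 1)) * (r (- (k + 1)) - r (- k)) + P (- (k - 1)) * (r (- (k - 1)) - r (- k))"
        if "c < r (- k)" for k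
      proof -
        have reflect: "- (k + 1) = - k - 1" "- (k - 1) = - k + 1"
          by simp_all
        show ?thesis
          unfolding reflect using balance[OF that] by linarith
      qed
    qed (use P_pos P_le r_le \<open>c < r j\<close> \<open>r j < r (j - 1)\<close> in simp_all)
  qed
qed

section \<open>Sub- and supersolutions of the stationary problem\<close>

lemma finite_support_le_multiple:
  fixes u W :: "'a \<Rightarrow> real"
  assumes "finite {j. u j \<noteq> 0}" "\<And>j. 0 \<le> u j" "\<And>j. 0 < W j"
  obtains a where "1 \<le> a" "\<And>j. u j \<le> a * W j"
proof
  define S where "S = {j. u j \<noteq> 0}"
  show "1 \<le> 1 + (\<Sum>i\<in>S. u i / W i)"
    using assms(2,3) by (simp add: sum_nonneg less_imp_le)
  show "u j \<le> (1 + (\<Sum>i\<in>S. u i / W i)) * W j" for j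
  proof (cases "j \<in> S")
    case True
    then have "u j / W j \<le> (\<Sum>i\<in>S. u i / W i)"
      using assms unfolding S_def by (intro member_le_sum) (auto simp: less_imp_le)
    then show ?thesis
      using assms(3)[of j] by (simp add: divide_le_eq algebra_simps)
  next
    case False
    then show ?thesis
      using assms(2,3) by (simp add: S_def sum_nonneg less_imp_le)
  qed
qed

locale reaction_lattice =
  fixes s0 tau eta lam :: real and I0 :: "int \<Rightarrow> real"
  assumes s0_pos: "0 < s0" and tau_pos: "0 < tau" and eta_pos: "0 < eta" and lam_pos: "0 < lam"
    and I0_nonneg: "\<And>j. 0 \<le> I0 j" and I0_somewhere_pos: "\<exists>j. 0 < I0 j"
begin

definition rhs :: "(int \<Rightarrow> real) \<Rightarrow> int \<Rightarrow> real" where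
  "rhs u j = reac s0 tau eta (u j) + I0 j + lam * dlap u j"

lemma rhs_ratio_identity:
  assumes "U j = r * W j"
  shows "lam * ((U (j + 1) - r * W (j + 1)) + (U (j - 1) - r * W (j - 1)))
    = rhs U j - r * rhs W j - (reac s0 tau eta (r * W j) - r * reac s0 tau eta (W j)) - (1 - r) * I0 j"
  using assms unfolding rhs_def dlap_def by (simp add: algebra_simps)

lemma subsolution_le_bounded_supersolution:
  assumes U_sub: "\<And>j. 0 \<le> rhs U j"
    and W_super: "\<And>j. rhs W j \<le> 0" and W_pos: "\<And>j. 0 < W j" and W_le: "\<And>j. W j \<le> M"
    and U_le: "\<And>j. U j \<le> a * W j"
  shows "U j \<le> W j"
proof -
  \<comment> \<open>At a site where U / W exceeds 1, strict concavity of the reaction forces U / W to increase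
    towards a neighbour; the ratio is bounded, so this cannot happen.\<close>
  have "U j / W j \<le> 1"
  proof (rule weighted_ratio_le[of W M _ a])
    fix j
    define r where "r = U j / W j"
    assume "1 < U j / W j"
    then have "1 < r"
      by (simp add: r_def)
    have "U j = r * W j"
      using W_pos[of j] by (simp add: r_def)
    have "reac s0 tau eta (r * W j) < r * reac s0 tau eta (W j)"
      using reac_mult_less[OF s0_pos tau_pos \<open>1 < r\<close> W_pos[of j]] .
    moreover have "0 \<le> rhs U j - r * rhs W j"
      using U_sub[of j] mult_nonneg_nonpos[of r "rhs W j"] W_super[of j] \<open>1 < r\<close> by linarith
    moreover have "(1 - r) * I0 j \<le> 0"
      using \<open>1 < r\<close> I0_nonneg[of j] by (simp add: mult_nonpos_nonneg)
    ultimately have "0 < lam * ((U (j + 1) - r * W (j + 1)) + (U (j - 1) - r * W (j - 1)))"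
      unfolding rhs_ratio_identity[of U j r W, OF \<open>U j = r * W j\<close>] by linarith
    then have "0 < (U (j + 1) - r * W (j + 1)) + (U (j - 1) - r * W (j - 1))"
      using lam_pos by (simp add: zero_less_mult_iff)
    moreover have "W i * (U i / W i - U j / W j) = U i - r * W i" for i
      using W_pos[of i] by (simp add: r_def field_simps)
    ultimately show "0 < W (j + 1) * (U (j + 1) / W (j + 1) - U j / W j)
        + W (j - 1) * (U (j - 1) / W (j - 1) - U j / W j)"
      by simp
  qed (use W_pos W_le U_le in \<open>auto simp: divide_le_eq\<close>)
  then show ?thesis
    using W_pos[of j] by (simp add: divide_le_eq)
qed

lemma bounded_subsolution_le_positive_supersolution:
  assumes W_sub: "\<And>j. 0 \<le> rhs W j" and W_pos: "\<And>j. 0 < W j" and W_le: "\<And>j. W j \<le> M"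
    and L_super: "\<And>j. rhs L j \<le> 0" and L_pos: "\<And>j. 0 < L j"
  shows "W j \<le> L j"
proof -
  have "- (L j / W j) \<le> - 1"
  proof (rule weighted_ratio_le[of W M _ 0])
    fix j
    define r where "r = L j / W j"
    assume "- 1 < - (L j / W j)"
    then have "r < 1"
      by (simp add: r_def)
    have "0 < r"
      using L_pos[of j] W_pos[of j] by (simp add: r_def)
    have "L j = r * W j"
      using W_pos[of j] by (simp add: r_def)
    have "r * reac s0 tau eta (W j) < reac s0 tau eta (r * W j)"
      using reac_mult_greater[OF s0_pos tau_pos \<open>0 < r\<close> \<open>r < 1\<close> W_pos[of j]] .
    moreover have "rhs L j - r * rhs W j \<le> 0"
      using L_super[of j] mult_nonneg_nonneg[of r "rhs W j"] W_sub[of j] \<open>0 < r\<close> by linarith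
    moreover have "0 \<le> (1 - r) * I0 j"
      using \<open>r < 1\<close> I0_nonneg[of j] by simp
    ultimately have "lam * ((L (j + 1) - r * W (j + 1)) + (L (j - 1) - r * W (j - 1))) < 0"
      unfolding rhs_ratio_identity[of L j r W, OF \<open>L j = r * W j\<close>] by linarith
    then have "(L (j + 1) - r * W (j + 1)) + (L (j - 1) - r * W (j - 1)) < 0"
      using lam_pos by (simp add: mult_less_0_iff)
    moreover have "W i * (- (L i / W i) - - (L j / W j)) = r * W i - L i" for i
      using W_pos[of i] by (simp add: r_def field_simps)
    ultimately show "0 < W (j + 1) * (- (L (j + 1) / W (j + 1)) - - (L j / W j))
        + W (j - 1) * (- (L (j - 1) / W (j - 1)) - - (L j / W j))"
      by simp
  qed (use W_pos W_le L_pos in \<open>auto simp: less_imp_le\<close>)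
  then show ?thesis
    using W_pos[of j] by (simp add: le_divide_eq)
qed

lemma nonneg_supersolution_pos:
  assumes L_nonneg: "\<And>j. 0 \<le> L j" and L_super: "\<And>j. rhs L j \<le> 0"
  shows "0 < L j"
proof (rule ccontr)
  \<comment> \<open>A zero of L forces zeros at both neighbours and no source there, so L would vanish
    identically, contradicting a positive source somewhere.\<close>
  have spread: "L (k - 1) = 0 \<and> L (k + 1) = 0 \<and> I0 k = 0" if "L k = 0" for k
  proof -
    have "I0 k + lam * (L (k - 1) + L (k + 1)) \<le> 0"
      using L_super[of k] that unfolding rhs_def dlap_def by simp
    moreover have "0 \<le> lam * (L (k - 1) + L (k + 1))"
      using lam_pos L_nonneg[of "k - 1"] L_nonneg[of "k + 1"] by simp
    ultimately have "I0 k = 0" "lam * (L (k - 1) + L (k + 1)) = 0"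
      using I0_nonneg[of k] by linarith+
    then have "I0 k = 0" "L (k - 1) + L (k + 1) = 0"
      using lam_pos by simp_all
    then show ?thesis
      using L_nonneg[of "k - 1"] L_nonneg[of "k + 1"] by simp
  qed
  assume "\<not> 0 < L j"
  then have "L j = 0"
    using L_nonneg[of j] by simp
  then have "L i = 0" for i
    by (induction i rule: int_induct[of _ j]) (use spread in auto)
  then show False
    using spread I0_somewhere_pos by fastforce
qed

lemma supersolution_scale:
  assumes "\<And>j. 0 \<le> W j" "\<And>j. rhs W j \<le> 0" "1 \<le> a"
  shows "rhs (\<lambda>i. a * W i) j \<le> 0"
proof -
  have "reac s0 tau eta (a * W j) \<le> a * reac s0 tau eta (W j)"
    using reac_mult_le[OF s0_pos tau_pos] assms by simp
  moreover have "I0 j \<le> a * I0 j"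
    using assms(3) I0_nonneg[of j] by (simp add: mult_le_cancel_right1)
  moreover have "0 \<le> a"
    using assms(3) by simp
  ultimately have "rhs (\<lambda>i. a * W i) j \<le> a * rhs W j"
    unfolding rhs_def dlap_def by (simp add: algebra_simps)
  also have "\<dots> \<le> 0"
    using assms(2)[of j] \<open>0 \<le> a\<close> by (simp add: mult_nonneg_nonpos)
  finally show ?thesis .
qed

end

section \<open>Long-time behaviour of the solution\<close>

locale reaction_lattice_solution = reaction_lattice +
  fixes I :: "real \<Rightarrow> int \<Rightarrow> real"
  assumes I_cont: "\<And>j. continuous_on {0..} (\<lambda>t. I t j)"
    and I_ode: "\<And>j t. 0 < t \<Longrightarrow> ((\<lambda>s. I s j) has_real_derivative rhs (I t) j) (at t)"
    and I_locally_bounded: "\<And>T. 0 \<le> T \<Longrightarrow> bounded ((\<lambda>(t, j). I t j) ` ({0..T} \<times> UNIV))"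
begin

lemma solution_bounded_on_interval:
  assumes "0 \<le> T"
  obtains B where "0 \<le> B" "\<And>t j. 0 \<le> t \<Longrightarrow> t \<le> T \<Longrightarrow> \<bar>I t j\<bar> \<le> B"
proof -
  obtain B where B: "\<And>x. x \<in> (\<lambda>(t, j). I t j) ` ({0..T} \<times> UNIV) \<Longrightarrow> norm x \<le> B"
    using I_locally_bounded[OF assms] unfolding bounded_iff by blast
  have "\<bar>I t j\<bar> \<le> B" if "0 \<le> t" "t \<le> T" for t j
    using B[of "I t j"] that by force
  moreover have "0 \<le> B"
    using calculation[of 0 0] assms by force
  ultimately show ?thesis
    using that by blast
qed

lemma solution_le_supersolution:
  assumes W_nonneg: "\<And>j. 0 \<le> W j" and W_super: "\<And>j. rhs W j \<le> 0" and init: "\<And>j. I 0 j \<le> W j"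
    and "0 \<le> t"
  shows "I t j \<le> W j"
proof -
  obtain B where "0 \<le> B" and B: "\<And>s i. 0 \<le> s \<Longrightarrow> s \<le> t \<Longrightarrow> \<bar>I s i\<bar> \<le> B"
    using solution_bounded_on_interval[OF \<open>0 \<le> t\<close>] by blast
  define C where "C = s0 * tau * exp (tau * B) + eta"
  have "0 \<le> W j - I t j"
  proof (rule comparison_principle[where W = "\<lambda>s i. W i - I s i" and lam = lam and C = C and B = B and T = t])
    show "0 \<le> C"
      unfolding C_def using s0_pos tau_pos eta_pos by simp
    show "continuous_on {0..t} (\<lambda>s. W i - I s i)" for i
      by (intro continuous_intros continuous_on_subset[OF I_cont]) auto
    show "((\<lambda>s. W i - I s i) has_real_derivative - rhs (I s) i) (at s)" if "0 < s" "s \<le> t" for s i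
      using DERIV_diff[OF DERIV_const I_ode[OF that(1)]] by simp
    show "lam * dlap (\<lambda>i. W i - I s i) i - C * \<bar>W i - I s i\<bar> \<le> - rhs (I s) i"
      if "0 < s" "s \<le> t" for s i
    proof -
      have "\<bar>reac s0 tau eta (W i) - reac s0 tau eta (I s i)\<bar> \<le> C * \<bar>W i - I s i\<bar>"
        unfolding C_def using s0_pos tau_pos eta_pos W_nonneg[of i] \<open>0 \<le> B\<close> B[of s i] that
        by (intro reac_lipschitz) (auto simp: abs_le_iff)
      then show ?thesis
        using W_super[of i] unfolding rhs_def dlap_def by (simp add: algebra_simps abs_le_iff)
    qed
    show "- B \<le> W i - I s i" if "0 \<le> s" "s \<le> t" for s i
      using W_nonneg[of i] B[OF that, of i] by linarith
  qed (use lam_pos init \<open>0 \<le> t\<close> in auto)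
  then show ?thesis
    by simp
qed

lemma solution_nonneg:
  assumes init: "\<And>j. 0 \<le> I 0 j" and "0 \<le> t"
  shows "0 \<le> I t j"
proof -
  obtain B where "0 \<le> B" and B: "\<And>s i. 0 \<le> s \<Longrightarrow> s \<le> t \<Longrightarrow> \<bar>I s i\<bar> \<le> B"
    using solution_bounded_on_interval[OF \<open>0 \<le> t\<close>] by blast
  define C where "C = s0 * tau * exp (tau * B) + eta"
  show ?thesis
  proof (rule comparison_principle[where W = I and lam = lam and C = C and B = B and T = t])
    show "0 \<le> C"
      unfolding C_def using s0_pos tau_pos eta_pos by simp
    show "continuous_on {0..t} (\<lambda>s. I s i)" for i
      by (rule continuous_on_subset[OF I_cont]) auto
    show "((\<lambda>s. I s i) has_real_derivative rhs (I s) i) (at s)" if "0 < s" "s \<le> t" for s i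
      using I_ode[OF that(1)] .
    show "lam * dlap (I s) i - C * \<bar>I s i\<bar> \<le> rhs (I s) i" if "0 < s" "s \<le> t" for s i
    proof -
      have "\<bar>reac s0 tau eta (I s i) - reac s0 tau eta 0\<bar> \<le> C * \<bar>I s i - 0\<bar>"
        unfolding C_def using s0_pos tau_pos eta_pos \<open>0 \<le> B\<close> B[of s i] that
        by (intro reac_lipschitz) (auto simp: abs_le_iff)
      then show ?thesis
        using I0_nonneg[of i] unfolding rhs_def by (simp add: abs_le_iff)
    qed
    show "- B \<le> I s i" if "0 \<le> s" "s \<le> t" for s i
      using B[OF that, of i] by linarith
  qed (use lam_pos init \<open>0 \<le> t\<close> in auto)
qed

lemma limsup_solution_subsolution:
  assumes U: "\<And>i. is_limsup_at_top (\<lambda>t. I t i) (U i)"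
  shows "0 \<le> rhs U j"
proof -
  let ?G = "\<lambda>v. reac s0 tau eta v + I0 j - 2 * lam * v"
  have "0 \<le> ?G (U j) + lam * (U (j - 1) + U (j + 1))"
  proof (rule limsup_rhs_nonneg[where G = ?G and g = "\<lambda>t. I t j"
        and h = "\<lambda>t. lam * (I t (j - 1) + I t (j + 1))"])
    show "isCont ?G (U j)"
      unfolding reac_def by (intro continuous_intros)
    show "((\<lambda>t. I t j) has_real_derivative ?G (I t j) + lam * (I t (j - 1) + I t (j + 1))) (at t)"
      if "0 < t" for t
    proof -
      have "rhs (I t) j = ?G (I t j) + lam * (I t (j - 1) + I t (j + 1))"
        unfolding rhs_def dlap_def by (simp add: algebra_simps)
      then show ?thesis
        using I_ode[OF that, of j] by simp
    qed
  qed (use I_cont U is_limsup_at_top_scaled_sum[OF U U lam_pos] in auto)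
  then show ?thesis
    unfolding rhs_def dlap_def by (simp add: algebra_simps)
qed

lemma liminf_solution_supersolution:
  assumes L: "\<And>i. is_limsup_at_top (\<lambda>t. - I t i) (- L i)"
  shows "rhs L j \<le> 0"
proof -
  let ?G = "\<lambda>w. - reac s0 tau eta (- w) - I0 j - 2 * lam * w"
  have "0 \<le> ?G (- L j) + lam * (- L (j - 1) + - L (j + 1))"
  proof (rule limsup_rhs_nonneg[where G = ?G and g = "\<lambda>t. - I t j"
        and h = "\<lambda>t. lam * (- I t (j - 1) + - I t (j + 1))"])
    show "isCont ?G (- L j)"
      unfolding reac_def by (intro continuous_intros)
    show "continuous_on {0..} (\<lambda>t. - I t j)"
      by (intro continuous_intros I_cont)
    show "((\<lambda>t. - I t j) has_real_derivative ?G (- I t j) + lam * (- I t (j - 1) + - I t (j + 1))) (at t)"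
      if "0 < t" for t
    proof -
      have "- rhs (I t) j = ?G (- I t j) + lam * (- I t (j - 1) + - I t (j + 1))"
        unfolding rhs_def dlap_def by (simp add: algebra_simps)
      then show ?thesis
        using DERIV_minus[OF I_ode[OF that, of j]] by simp
    qed
  qed (use L is_limsup_at_top_scaled_sum[OF L L lam_pos] in auto)
  then show ?thesis
    unfolding rhs_def dlap_def by (simp add: algebra_simps)
qed

lemma solution_between_zero_and_stationary_multiple:
  assumes init_nonneg: "\<And>j. 0 \<le> I 0 j" and init_finite: "finite {j. I 0 j \<noteq> 0}"
    and W_pos: "\<And>j. 0 < W j" and W_stationary: "\<And>j. rhs W j = 0"
  obtains a where "1 \<le> a" "\<And>t j. 0 \<le> t \<Longrightarrow> 0 \<le> I t j \<and> I t j \<le> a * W j"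
proof -
  obtain a where "1 \<le> a" and a: "\<And>j. I 0 j \<le> a * W j"
    using finite_support_le_multiple[of "I 0" W, OF init_finite init_nonneg W_pos] by blast
  have "rhs (\<lambda>i. a * W i) j \<le> 0" for j
    using supersolution_scale[of W a j] W_pos W_stationary \<open>1 \<le> a\<close> by (simp add: less_imp_le)
  then have "0 \<le> I t j \<and> I t j \<le> a * W j" if "0 \<le> t" for t j
    using solution_nonneg[OF init_nonneg that] solution_le_supersolution[of "\<lambda>i. a * W i", OF _ _ a that]
      W_pos \<open>1 \<le> a\<close> by (simp add: less_imp_le)
  with \<open>1 \<le> a\<close> show ?thesis
    using that by blast
qed

lemma solution_tendsto_stationary:
  assumes init_nonneg: "\<And>j. 0 \<le> I 0 j" and init_finite: "finite {j. I 0 j \<noteq> 0}"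
    and W_pos: "\<And>j. 0 < W j" and W_bdd: "bounded (range W)" and W_stationary: "\<And>j. rhs W j = 0"
  shows "((\<lambda>t. I t j) \<longlongrightarrow> W j) at_top"
proof -
  obtain M where "\<And>x. x \<in> range W \<Longrightarrow> norm x \<le> M"
    using W_bdd unfolding bounded_iff by blast
  then have M: "W i \<le> M" for i
    using abs_le_D1[of "W i" M] by simp
  obtain a where "1 \<le> a" and "\<And>t i. 0 \<le> t \<Longrightarrow> 0 \<le> I t i \<and> I t i \<le> a * W i"
    using solution_between_zero_and_stationary_multiple[OF init_nonneg init_finite W_pos W_stationary]
    by blast
  then have I_bounds: "\<forall>\<^sub>F t in at_top. 0 \<le> I t i \<and> I t i \<le> a * W i" for i
    by (intro eventually_mono[OF eventually_ge_at_top[of 0]]) blast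
  have I_abs: "\<forall>\<^sub>F t in at_top. \<bar>I t i\<bar> \<le> a * M" for i
    using I_bounds[of i]
  proof eventually_elim
    case (elim t)
    moreover have "a * W i \<le> a * M"
      using M[of i] \<open>1 \<le> a\<close> by (intro mult_left_mono) auto
    ultimately show ?case
      by simp
  qed
  obtain U where U: "\<And>i. is_limsup_at_top (\<lambda>t. I t i) (U i)"
    using is_limsup_at_top_exists[OF I_abs] by metis
  have "\<exists>L. is_limsup_at_top (\<lambda>t. - I t i) (- L)" for i
    using is_limsup_at_top_exists[of "\<lambda>t. - I t i" "a * M"] I_abs[of i] by (simp) (metis minus_minus)
  then obtain L where L: "\<And>i. is_limsup_at_top (\<lambda>t. - I t i) (- L i)"
    by metis
  have "U i \<le> a * W i" for i
    by (rule is_limsup_at_top_le[OF U]) (use I_bounds[of i] in eventually_elim, simp)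
  have "- L i \<le> 0" for i
    by (rule is_limsup_at_top_le[OF L]) (use I_bounds[of i] in eventually_elim, simp)
  have "U j \<le> W j"
    by (rule subsolution_le_bounded_supersolution[of U W M a])
      (use limsup_solution_subsolution[OF U] W_stationary W_pos M \<open>\<And>i. U i \<le> a * W i\<close> in auto)
  moreover have "W j \<le> L j"
  proof (rule bounded_subsolution_le_positive_supersolution[of W M L])
    show "rhs L i \<le> 0" for i
      using liminf_solution_supersolution[OF L] .
    then show "0 < L i" for i
      using nonneg_supersolution_pos[of L] \<open>\<And>i. - L i \<le> 0\<close> by simp
  qed (use W_stationary W_pos M in auto)
  ultimately show ?thesis
    using tendsto_if_limsup_liminf[OF U L] by simp
qed

end

theorem theorem2:
  fixes s0 tau eta lam :: real
    and I0 :: "int \<Rightarrow> real"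
    and Iinf :: "int \<Rightarrow> real"
    and u0 :: "int \<Rightarrow> real"
    and I :: "real \<Rightarrow> int \<Rightarrow> real"
  assumes s0: "0 < s0" "s0 < 1"
    and pars: "0 < tau" "0 < eta" "0 < lam"
    and I0_fin: "finite {j. I0 j \<noteq> 0}"
    and I0_range: "\<And>j. 0 \<le> I0 j \<and> I0 j < 1"
    and I0_pos: "\<exists>j. 0 < I0 j"
    \<comment> \<open>the (unique) positive bounded stationary solution\<close>
    and Iinf_pos: "\<And>j. 0 < Iinf j"
    and Iinf_bdd: "bounded (range Iinf)"
    and Iinf_eq: "\<And>j. 0 = reac s0 tau eta (Iinf j) + I0 j + lam * dlap Iinf j"
    \<comment> \<open>nonnegative, bounded, finitely supported initial condition\<close>
    and u0_nonneg: "\<And>j. 0 \<le> u0 j"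
    and u0_bdd: "bounded (range u0)"
    and u0_fin: "finite {j. u0 j \<noteq> 0}"
    \<comment> \<open>I is the solution (bounded on bounded time intervals, as a solution in l-infinity)\<close>
    and I_init: "\<And>j. I 0 j = u0 j"
    and I_cont: "\<And>j. continuous_on {0..} (\<lambda>t. I t j)"
    and I_ode: "\<And>j t. 0 < t \<Longrightarrow>
        ((\<lambda>s. I s j) has_real_derivative
           (reac s0 tau eta (I t j) + I0 j + lam * dlap (I t) j)) (at t)"
    and I_locbdd: "\<And>T. 0 \<le> T \<Longrightarrow> bounded ((\<lambda>(t, j). I t j) ` ({0..T} \<times> UNIV))"
  shows "\<forall>K::nat. \<forall>e>0. \<exists>T. \<forall>t\<ge>T. \<forall>j. \<bar>j\<bar> \<le> int K \<longrightarrow> \<bar>I t j - Iinf j\<bar> < e"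
proof (intro allI impI)
  fix K :: nat and e :: real
  assume "0 < e"
  interpret reaction_lattice s0 tau eta lam I0
    using s0 pars I0_range I0_pos by unfold_locales auto
  interpret reaction_lattice_solution s0 tau eta lam I0 I
    using I_cont I_ode I_locbdd by unfold_locales (simp_all add: rhs_def)
  have "((\<lambda>t. I t j) \<longlongrightarrow> Iinf j) at_top" for j
    by (rule solution_tendsto_stationary)
      (use I_init u0_nonneg u0_fin Iinf_pos Iinf_bdd Iinf_eq in \<open>auto simp: rhs_def\<close>)
  then have "\<forall>\<^sub>F t in at_top. \<forall>j\<in>{- int K..int K}. \<bar>I t j - Iinf j\<bar> < e"
    using \<open>0 < e\<close> by (intro eventually_ball_finite) (auto simp: tendsto_iff dist_real_def)
  then obtain T where "\<And>t j. T \<le> t \<Longrightarrow> j \<in> {- int K..int K} \<Longrightarrow> \<bar>I t j - Iinf j\<bar> < e"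
    unfolding eventually_at_top_linorder by blast
  then show "\<exists>T. \<forall>t\<ge>T. \<forall>j. \<bar>j\<bar> \<le> int K \<longrightarrow> \<bar>I t j - Iinf j\<bar> < e"
    by (intro exI[of _ T]) (auto simp: abs_le_iff)
qed

end
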